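(* Let $n\ge1$, $N,M\ge1$. Users have opinions $u_i^t\in[-1,1]^n$ ($i=1,\dots,N$) and creators have opinions $c_j^t\in[-1,1]^n$ ($j=1,\dots,M$). Assume the social adjacency matrix $A$ is diagonal, with $A_{ii}\in(0,1]$, and that creators are fully stubborn, $\Gamma=I_M$, so that $c_j^t=c_j^0=:c_j$ for all $t$. Let the recommender be greedy: at each time $t$, user $i$ consumes the content of creator $j(i,t)\in\arg\min_{j}\|c_j^t-u_i^t\|_2$, and the user opinions evolve as $$u_i^{t+1}=(1-\lambda_i)\big(A_{ii}\,u_i^t+(1-A_{ii})\,c_{j(i,t)}\big)+\lambda_i\,u_i^0,$$ with stubbornness $\lambda_i\in(0,1]$. Then the induced user partition $\mathcal F^t_1,\dots,\mathcal F^t_M$, where $\mathcal F^t_j=\{i: j(i,t)=j\}$, is static (i.e. $\mathcal F^t_j=\mathcal F^0_j$ for all $t$ and $j$), and each user's opinion converges to a steady state $u_i^*\in\mathbb R^n$. Moreover, for every user $i\in\mathcal F_j$, the distance $\|u_i^t-c_j\|_2$ decreases monotonically in time, i.e. $\|u_i^{t+1}-c_j\|_2\le\|u_i^t-c_j\|_2$ for all $t\ge0$.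
   Context: This is the multi-topic Friedkin–Johnsen user–creator dynamics specialized to a diagonal social influence matrix $A$ (no user–user interaction) and fully stubborn creators. In the general model, $u^{t+1}_i=(1-\lambda_i)\big(\sum_k A_{ik}u_k^t+\sum_j B^t_{ij}c_j^t\big)+\lambda_i u_i^0$ where $B^t_{ij}\neq0$ only for the creator $j$ consumed by user $i$ at time $t$ and $\sum_kA_{ik}+\sum_jB^t_{ij}=1$; with $A$ diagonal this gives $B^t_{i,j(i,t)}=1-A_{ii}$. The greedy recommender gives each user the single creator closest (in Euclidean norm) to the user's current opinion; ties in the argmin are broken by a fixed deterministic rule (e.g. smallest index). *)

theory Defs
  imports "HOL-Analysis.Analysis"
begin

definition greedy :: "(nat \<Rightarrow> real^'n) \<Rightarrow> nat \<Rightarrow> real^'n \<Rightarrow> nat" where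
  "greedy c M x = (LEAST j. j < M \<and> (\<forall>k<M. norm (c j - x) \<le> norm (c k - x)))"

text \<open>Opinion trajectory of a single user with diagonal influence entry a = A_ii,
  stubbornness l = lambda_i, initial opinion x0, facing fully stubborn creators c.
  With A diagonal, B^t_{i,j(i,t)} = 1 - A_ii.\<close>
primrec user_traj :: "(nat \<Rightarrow> real^'n) \<Rightarrow> nat \<Rightarrow> real \<Rightarrow> real \<Rightarrow> real^'n \<Rightarrow> nat \<Rightarrow> real^'n" where
  "user_traj c M a l x0 0 = x0"
| "user_traj c M a l x0 (Suc t) =
     (1 - l) *\<^sub>R (a *\<^sub>R user_traj c M a l x0 t
                     + (1 - a) *\<^sub>R c (greedy c M (user_traj c M a l x0 t)))
     + l *\<^sub>R x0"

end

theory Submission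
  imports Defs
begin

text \<open>Along the segment from the nearest creator \<open>c\<^sub>j\<close> to the user's opinion \<open>x\<close>, the distance
  to \<open>c\<^sub>j\<close> shrinks exactly as fast as the user moves, while the distance to any other creator
  shrinks at most that fast; so \<open>c\<^sub>j\<close> stays the greedy choice on the whole segment. Each update
  is a convex combination of the current opinion, \<open>c\<^sub>j\<close> and the initial opinion, hence keeps
  the user on the segment from \<open>c\<^sub>j\<close> to the initial opinion, with a weight on the initial
  opinion that obeys a monotone affine recurrence starting at \<open>1\<close>. That weight decreases
  to a limit, which yields both the convergence and the monotone approach to \<open>c\<^sub>j\<close>.\<close>

lemma greedy_nearest:
  assumes "0 < M"
  shows "greedy c M x < M"
    and "k < M \<Longrightarrow> norm (c (greedy c M x) - x) \<le> norm (c k - x)"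
    and "k < greedy c M x \<Longrightarrow> norm (c (greedy c M x) - x) < norm (c k - x)"
proof -
  let ?P = "\<lambda>j. j < M \<and> (\<forall>k<M. norm (c j - x) \<le> norm (c k - x))"
  obtain j where "is_arg_min (\<lambda>k. norm (c k - x)) (\<lambda>k. k \<in> {..<M}) j"
    using ex_is_arg_min_if_finite[of "{..<M}"] assms by auto
  then have "?P j"
    by (auto simp: is_arg_min_linorder)
  then have "?P (greedy c M x)"
    unfolding greedy_def by (rule LeastI)
  then show "greedy c M x < M" and "k < M \<Longrightarrow> norm (c (greedy c M x) - x) \<le> norm (c k - x)"
    by auto
  assume "k < greedy c M x"
  then have "\<not> ?P k"
    unfolding greedy_def by (rule not_less_Least)
  with \<open>?P (greedy c M x)\<close> \<open>k < greedy c M x\<close> show "norm (c (greedy c M x) - x) < norm (c k - x)"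
    by force
qed

lemma greedy_eqI:
  assumes "j < M"
    and "\<And>k. k < M \<Longrightarrow> norm (c j - x) \<le> norm (c k - x)"
    and "\<And>k. k < j \<Longrightarrow> norm (c j - x) < norm (c k - x)"
  shows "greedy c M x = j"
  unfolding greedy_def
proof (rule Least_equality)
  show "j < M \<and> (\<forall>k<M. norm (c j - x) \<le> norm (c k - x))"
    using assms(1,2) by blast
next
  fix k
  assume "k < M \<and> (\<forall>k'<M. norm (c k - x) \<le> norm (c k' - x))"
  then show "j \<le> k"
    using assms(1,3) by (meson leD leI)
qed

lemma dist_diff_le_closed_segment:
  fixes x :: "'a::euclidean_space"
  assumes "y \<in> closed_segment p x"
  shows "dist q x - dist p x \<le> dist q y - dist p y"
proof -
  have "dist p x = dist p y + dist y x"
    using assms between[of p x y] by (simp add: between_mem_segment)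
  moreover have "dist q x \<le> dist q y + dist y x"
    by (rule dist_triangle)
  ultimately show ?thesis
    by linarith
qed

lemma greedy_closed_segment:
  assumes "0 < M" and "y \<in> closed_segment (c (greedy c M x)) x"
  shows "greedy c M y = greedy c M x"
proof -
  let ?j = "greedy c M x"
  have gap: "norm (c k - x) - norm (c ?j - x) \<le> norm (c k - y) - norm (c ?j - y)" for k
    using dist_diff_le_closed_segment[OF assms(2), of "c k"] by (simp add: dist_norm)
  show ?thesis
  proof (rule greedy_eqI)
    show "?j < M"
      using greedy_nearest(1)[OF assms(1)] .
    show "norm (c ?j - y) \<le> norm (c k - y)" if "k < M" for k
      using greedy_nearest(2)[OF assms(1) that, of c x] gap[of k] by linarith
    show "norm (c ?j - y) < norm (c k - y)" if "k < ?j" for k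
      using greedy_nearest(3)[OF assms(1) that] gap[of k] by linarith
  qed
qed

text \<open>While the user keeps consuming creator \<open>c\<^sub>j\<close>, the update rule maps
  \<open>(1 - w) c\<^sub>j + w x\<^sub>0\<close> to \<open>(1 - w') c\<^sub>j + w' x\<^sub>0\<close> with \<open>w' = (1 - l) a w + l\<close>.\<close>

primrec init_weight :: "real \<Rightarrow> real \<Rightarrow> nat \<Rightarrow> real" where
  "init_weight a l 0 = 1"
| "init_weight a l (Suc t) = (1 - l) * a * init_weight a l t + l"

lemma init_weight_nonneg:
  assumes "0 \<le> a" and "l \<le> 1" and "0 \<le> l"
  shows "0 \<le> init_weight a l t"
  using assms by (induction t) auto

lemma init_weight_Suc_le:
  assumes "0 \<le> a" "a \<le> 1" "0 \<le> l" "l \<le> 1"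
  shows "init_weight a l (Suc t) \<le> init_weight a l t"
proof (induction t)
  case 0
  have "(1 - l) * a \<le> 1 - l"
    using assms by (simp add: mult_left_le)
  then show ?case
    by simp
next
  case (Suc t)
  then show ?case
    using assms by (simp add: mult_left_mono)
qed

lemma decseq_init_weight:
  assumes "0 \<le> a" "a \<le> 1" "0 \<le> l" "l \<le> 1"
  shows "decseq (init_weight a l)"
  using init_weight_Suc_le[OF assms] by (rule decseq_SucI)

lemma init_weight_le_one:
  assumes "0 \<le> a" "a \<le> 1" "0 \<le> l" "l \<le> 1"
  shows "init_weight a l t \<le> 1"
  using decseq_init_weight[OF assms] by (metis decseqD init_weight.simps(1) zero_le)

lemma convergent_init_weight:
  assumes "0 \<le> a" "a \<le> 1" "0 \<le> l" "l \<le> 1"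
  shows "convergent (init_weight a l)"
proof (rule decseq_convergent[OF decseq_init_weight[OF assms]])
  show "\<forall>t. 0 \<le> init_weight a l t"
    using assms init_weight_nonneg by blast
qed (auto simp: convergent_def)

lemma user_traj_eq:
  assumes "0 < M" "0 \<le> a" "a \<le> 1" "0 \<le> l" "l \<le> 1"
  shows "user_traj c M a l x0 t
    = (1 - init_weight a l t) *\<^sub>R c (greedy c M x0) + init_weight a l t *\<^sub>R x0"
    and "greedy c M (user_traj c M a l x0 t) = greedy c M x0"
proof -
  let ?j = "greedy c M x0"
  have on_segment: "greedy c M ((1 - init_weight a l t) *\<^sub>R c ?j + init_weight a l t *\<^sub>R x0) = ?j"
    for t
  proof (rule greedy_closed_segment[OF \<open>0 < M\<close>])
    show "(1 - init_weight a l t) *\<^sub>R c ?j + init_weight a l t *\<^sub>R x0 \<in> closed_segment (c ?j) x0"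
      using init_weight_nonneg[of a l t] init_weight_le_one[of a l t] assms
      by (auto simp: closed_segment_def)
  qed
  show eq: "user_traj c M a l x0 t = (1 - init_weight a l t) *\<^sub>R c ?j + init_weight a l t *\<^sub>R x0"
  proof (induction t)
    case 0
    then show ?case
      by simp
  next
    case (Suc t)
    then have "greedy c M (user_traj c M a l x0 t) = ?j"
      using on_segment[of t] by simp
    with Suc show ?case
      by (simp only: user_traj.simps) (simp add: algebra_simps)
  qed
  show "greedy c M (user_traj c M a l x0 t) = ?j"
    unfolding eq by (rule on_segment)
qed

lemma norm_user_traj_diff_greedy:
  assumes "0 < M" "0 \<le> a" "a \<le> 1" "0 \<le> l" "l \<le> 1"
  shows "norm (user_traj c M a l x0 t - c (greedy c M x0))
    = init_weight a l t * norm (x0 - c (greedy c M x0))"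
proof -
  have "user_traj c M a l x0 t - c (greedy c M x0) = init_weight a l t *\<^sub>R (x0 - c (greedy c M x0))"
    by (simp add: user_traj_eq(1)[OF assms] algebra_simps)
  then show ?thesis
    using init_weight_nonneg[of a l t] assms by simp
qed

lemma norm_user_traj_Suc_le:
  assumes "0 < M" "0 \<le> a" "a \<le> 1" "0 \<le> l" "l \<le> 1"
  shows "norm (user_traj c M a l x0 (Suc t) - c (greedy c M x0))
    \<le> norm (user_traj c M a l x0 t - c (greedy c M x0))"
  unfolding norm_user_traj_diff_greedy[OF assms]
  using init_weight_Suc_le[OF assms(2-)] by (simp add: mult_right_mono)

lemma convergent_user_traj:
  assumes "0 < M" "0 \<le> a" "a \<le> 1" "0 \<le> l" "l \<le> 1"
  shows "convergent (user_traj c M a l x0)"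
proof -
  obtain w where "init_weight a l \<longlonglongrightarrow> w"
    using convergent_init_weight[OF assms(2-)] by (auto simp: convergent_def)
  then have "(\<lambda>t. (1 - init_weight a l t) *\<^sub>R c (greedy c M x0) + init_weight a l t *\<^sub>R x0)
      \<longlonglongrightarrow> (1 - w) *\<^sub>R c (greedy c M x0) + w *\<^sub>R x0"
    by (intro tendsto_intros)
  moreover have "user_traj c M a l x0
      = (\<lambda>t. (1 - init_weight a l t) *\<^sub>R c (greedy c M x0) + init_weight a l t *\<^sub>R x0)"
    using user_traj_eq(1)[OF assms] by blast
  ultimately show ?thesis
    by (auto simp: convergent_def)
qed

theorem lemma1:
  fixes N M :: nat
    and u0 c :: "nat \<Rightarrow> real^'n"
    and A lam :: "nat \<Rightarrow> real"
  assumes "N \<ge> 1" and "M \<ge> 1"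
    and "\<forall>i<N. \<forall>k. u0 i $ k \<in> {-1..1}"
    and "\<forall>j<M. \<forall>k. c j $ k \<in> {-1..1}"
    and "\<forall>i<N. 0 < A i \<and> A i \<le> 1"
    and "\<forall>i<N. 0 < lam i \<and> lam i \<le> 1"
  defines "u \<equiv> (\<lambda>i t. user_traj c M (A i) (lam i) (u0 i) t)"
    and "F \<equiv> (\<lambda>t j. {i. i < N \<and> greedy c M (user_traj c M (A i) (lam i) (u0 i) t) = j})"
  shows "(\<forall>t. \<forall>j<M. F t j = F 0 j)
         \<and> (\<forall>i<N. \<exists>ustar. (\<lambda>t. u i t) \<longlonglongrightarrow> ustar)
         \<and> (\<forall>j<M. \<forall>i\<in>F 0 j. \<forall>t. norm (u i (Suc t) - c j) \<le> norm (u i t - c j))"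
proof -
  have params: "0 < M" "0 \<le> A i" "A i \<le> 1" "0 \<le> lam i" "lam i \<le> 1" if "i < N" for i
    using assms(2,5,6) that by auto
  have "greedy c M (u i t) = greedy c M (u0 i)" if "i < N" for i t
    unfolding u_def using user_traj_eq(2)[OF params[OF that]] .
  then have "F t j = F 0 j" for t j
    by (auto simp: F_def u_def)
  moreover have "\<exists>ustar. (\<lambda>t. u i t) \<longlonglongrightarrow> ustar" if "i < N" for i
    using convergent_user_traj[OF params[OF that]] by (simp add: u_def convergent_def)
  moreover have "norm (u i (Suc t) - c j) \<le> norm (u i t - c j)" if "i \<in> F 0 j" for i j t
    using that norm_user_traj_Suc_le[OF params] by (auto simp: u_def F_def)
  ultimately show ?thesis
    by blast
qed

end
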